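(* Let $\vec G_0$ be a directed graph with Eulerian Laplacian $\mathbf{L}_{\vec G_0}$, let $\beta>0$, and let $\vec G_1 = \mathcal{U}^{(\beta)}(\vec G_0)$ be its $\beta$-partial-symmetrization. Then $\mathbf{L}_{\vec G_1}^+$ is a $\big(1-\frac{1}{1+\beta}\big)$-approximate pseudoinverse of $\mathbf{L}_{\vec G_0}$ with respect to $\mathbf{U}_{\mathbf{L}_{\vec G_1}}$.
   Context: For a weighted directed graph $\vec G$ with adjacency matrix $\mathbf{A}_{\vec G}(i,j)=\omega((i,j))$ and diagonal out-degree matrix $\mathbf{D}_{\vec G}$, $\mathbf{L}_{\vec G}=\mathbf{D}_{\vec G}-\mathbf{A}_{\vec G}^T$; it is Eulerian if $\mathbf{L}_{\vec G}\mathbf{1}=\mathbf{0}$. The undirectification $\mathcal{U}(\vec G)$ is the undirected graph with edge $\{u,v\}$ of weight $\frac12(\omega(u,v)+\omega(v,u))$ (with $\omega=0$ for non-edges), viewed as a directed graph with both orientations. The $\beta$-partial-symmetrization is $\mathcal{U}^{(\beta)}(\vec G)=\beta\cdot\mathcal{U}(\vec G)+\vec G$, so $\mathbf{L}_{\mathcal{U}^{(\beta)}(\vec G)}=\beta\mathbf{U}_{\mathbf{L}_{\vec G}}+\mathbf{L}_{\vec G}$, where $\mathbf{U}_{\mathbf{M}}=\frac12(\mathbf{M}+\mathbf{M}^T)$. For PSD $\mathbf{H}$, $\|\mathbf{M}\|_{\mathbf{H}\to\mathbf{H}}=\max_{\mathbf{x}\neq0}\|\mathbf{M}\mathbf{x}\|_{\mathbf{H}}/\|\mathbf{x}\|_{\mathbf{H}}$,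 $\|\mathbf{x}\|_{\mathbf{H}}=\sqrt{\mathbf{x}^T\mathbf{H}\mathbf{x}}$. $\mathbf{Z}$ is an $\epsilon$-approximate pseudoinverse of $\mathbf{M}$ with respect to PSD $\mathbf{U}$ if $\ker(\mathbf{U})\subseteq\ker(\mathbf{M})=\ker(\mathbf{M}^T)=\ker(\mathbf{Z})=\ker(\mathbf{Z}^T)$ and $\|\mathbf{I}_{\operatorname{im}(\mathbf{M})}-\mathbf{Z}\mathbf{M}\|_{\mathbf{U}\to\mathbf{U}}\le\epsilon$. *)

theory Defs
  imports "HOL-Analysis.Analysis"
begin

text \<open>A weighted directed graph on the finite vertex type 'n is given by its
  weight function w, with w i j = omega((i,j)) >= 0 (w i j = 0 for non-edges).\<close>

definition weighted_digraph :: "('n::finite \<Rightarrow> 'n \<Rightarrow> real) \<Rightarrow> bool" where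
  "weighted_digraph w \<longleftrightarrow> (\<forall>i j. 0 \<le> w i j)"

definition adj_mat :: "('n::finite \<Rightarrow> 'n \<Rightarrow> real) \<Rightarrow> real^'n^'n" where
  "adj_mat w = (\<chi> i j. w i j)"

definition outdeg_mat :: "('n::finite \<Rightarrow> 'n \<Rightarrow> real) \<Rightarrow> real^'n^'n" where
  "outdeg_mat w = (\<chi> i j. if i = j then (\<Sum>k\<in>UNIV. w i k) else 0)"

definition dlap :: "('n::finite \<Rightarrow> 'n \<Rightarrow> real) \<Rightarrow> real^'n^'n" where
  "dlap w = outdeg_mat w - transpose (adj_mat w)"

definition eulerian :: "('n::finite \<Rightarrow> 'n \<Rightarrow> real) \<Rightarrow> bool" where
  "eulerian w \<longleftrightarrow> dlap w *v (\<chi> i. 1) = 0"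

text \<open>Undirectification, viewed as a directed graph with both orientations.\<close>
definition undirectify :: "('n \<Rightarrow> 'n \<Rightarrow> real) \<Rightarrow> ('n \<Rightarrow> 'n \<Rightarrow> real)" where
  "undirectify w = (\<lambda>u v. (w u v + w v u) / 2)"

definition partial_sym :: "real \<Rightarrow> ('n \<Rightarrow> 'n \<Rightarrow> real) \<Rightarrow> ('n \<Rightarrow> 'n \<Rightarrow> real)" where
  "partial_sym \<beta> w = (\<lambda>u v. \<beta> * undirectify w u v + w u v)"

definition sym_part :: "real^'n^'n \<Rightarrow> real^'n^'n" where
  "sym_part M = (1/2) *\<^sub>R (M + transpose M)"

definition psd :: "real^'n^'n \<Rightarrow> bool" where
  "psd H \<longleftrightarrow> transpose H = H \<and> (\<forall>x. 0 \<le> x \<bullet> (H *v x))"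

definition ker_mat :: "real^'n^'m \<Rightarrow> (real^'n) set" where
  "ker_mat M = {x. M *v x = 0}"

definition im_mat :: "real^'n^'m \<Rightarrow> (real^'m) set" where
  "im_mat M = range (\<lambda>x. M *v x)"

definition pinv :: "real^'n^'n \<Rightarrow> real^'n^'n" where
  "pinv M = (THE X. M ** X ** M = M \<and> X ** M ** X = X \<and>
                    transpose (M ** X) = M ** X \<and> transpose (X ** M) = X ** M)"

definition proj_im :: "real^'n^'n \<Rightarrow> real^'n^'n" where
  "proj_im M = (THE P. transpose P = P \<and> P ** P = P \<and> im_mat P = im_mat M)"

definition hnorm :: "real^'n^'n \<Rightarrow> real^'n \<Rightarrow> real" where
  "hnorm H x = sqrt (x \<bullet> (H *v x))"

definition hopnorm :: "real^'n^'n \<Rightarrow> real^'n^'n \<Rightarrow> real" where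
  "hopnorm H M = Sup {hnorm H (M *v x) / hnorm H x | x. x \<noteq> 0}"

definition approx_pinv :: "real \<Rightarrow> real^'n^'n \<Rightarrow> real^'n^'n \<Rightarrow> real^'n^'n \<Rightarrow> bool" where
  "approx_pinv \<epsilon> Z M U \<longleftrightarrow>
     psd U \<and>
     ker_mat U \<subseteq> ker_mat M \<and> ker_mat M = ker_mat (transpose M) \<and>
     ker_mat (transpose M) = ker_mat Z \<and> ker_mat Z = ker_mat (transpose Z) \<and>
     hopnorm U (proj_im M - Z ** M) \<le> \<epsilon>"

end

(*
  The Eulerian property makes in- and out-degrees agree, so x^T L x = 1/2 sum w_ij (x_i - x_j)^2
  for L = L_G0: this form is nonnegative, and L, L^T and U_L all have the same kernel, the vectors
  constant along edges. The partial symmetrization has Laplacian L_1 = L + beta U_L with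
  U_L1 = (1 + beta) U_L and again the same kernel, so L_1^+ L_1 is the orthogonal projection onto
  im L and

    I_im(L) - L_1^+ L = L_1^+ (L_1 - L) = beta / (1 + beta) * L_1^+ U_L1.

  Finally L_1^+ U_L1 is a contraction in the U_L1-norm: y = L_1^+ U_L1 x solves L_1 y = U_L1 x,
  hence y^T U_L1 y = y^T L_1 y = y^T U_L1 x, and expanding (y - x)^T U_L1 (y - x) >= 0 gives
  y^T U_L1 y <= x^T U_L1 x.
*)

theory Submission
  imports Defs
begin

section \<open>Kernels and images of matrices\<close>

declare transpose_matrix_vector [simp del]

lemma transpose_add: "transpose (A + B) = transpose A + transpose (B::'a::semiring_1^'n^'m)"
  by (simp add: transpose_def vec_eq_iff)

lemma transpose_diff: "transpose (A - B) = transpose A - transpose (B::'a::ring_1^'n^'m)"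
  by (simp add: transpose_def vec_eq_iff)

lemma inner_transpose_mult: "(transpose A *v x) \<bullet> y = x \<bullet> ((A::real^'n^'m) *v y)"
  by (simp add: dot_lmul_matrix transpose_matrix_vector)

lemma inner_transpose_mult_self: "x \<bullet> (transpose A *v x) = x \<bullet> ((A::real^'n^'n) *v x)"
  by (metis inner_commute inner_transpose_mult)

lemma transpose_sym_part: "transpose (sym_part M) = sym_part (M::real^'n^'n)"
  by (simp add: sym_part_def transpose_scalar transpose_add add.commute)

lemma sym_part_mult_vec: "sym_part M *v x = (1/2) *\<^sub>R (M *v x + transpose M *v x)"
  unfolding sym_part_def
  by (simp only: scaleR_matrix_vector_assoc[symmetric] matrix_vector_mult_add_rdistrib)

lemma inner_sym_part: "x \<bullet> (sym_part M *v x) = x \<bullet> ((M::real^'n^'n) *v x)"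
  by (simp only: sym_part_mult_vec inner_add_right inner_scaleR_right inner_transpose_mult_self) simp

lemma subspace_im_mat: "subspace (im_mat (A::real^'n^'m))"
  unfolding im_mat_def
  by (intro real_vector.linear_subspace_image subspace_UNIV matrix_vector_mul_linear)

lemma ker_mat_eq_orthogonal_comp_im: "ker_mat A = (im_mat (transpose (A::real^'n^'m)))\<^sup>\<bottom>"
  using ker_orthogonal_comp_adjoint[OF matrix_vector_mul_linear, of A]
  by (simp add: ker_mat_def im_mat_def adjoint_matrix vimage_def)

lemma im_mat_eq_orthogonal_comp_ker: "im_mat A = (ker_mat (transpose (A::real^'n^'m)))\<^sup>\<bottom>"
  by (simp add: ker_mat_eq_orthogonal_comp_im orthogonal_comp_self subspace_im_mat)

lemma im_mat_eqI:
  "ker_mat (transpose A) = ker_mat (transpose B) \<Longrightarrow> im_mat (A::real^'n^'m) = im_mat B"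
  by (simp add: im_mat_eq_orthogonal_comp_ker)

section \<open>Orthogonal projections\<close>

definition is_orthogonal_projection :: "real^'n^'n \<Rightarrow> (real^'n) set \<Rightarrow> bool" where
  "is_orthogonal_projection P S \<longleftrightarrow> transpose P = P \<and> P ** P = P \<and> im_mat P = S"

lemma orthogonal_projection_fixes:
  assumes "is_orthogonal_projection P S" "s \<in> S"
  shows "P *v s = s"
proof -
  obtain t where "s = P *v t"
    using assms unfolding is_orthogonal_projection_def im_mat_def by blast
  then show ?thesis
    using assms(1) by (simp add: is_orthogonal_projection_def matrix_vector_mul_assoc)
qed

lemma orthogonal_projection_residual:
  assumes "is_orthogonal_projection P S" "s \<in> S"
  shows "(x - P *v x) \<bullet> s = 0"
proof -
  have "(P *v x) \<bullet> s = x \<bullet> (P *v s)"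
    using assms(1) inner_transpose_mult[of P x s] by (simp add: is_orthogonal_projection_def)
  then show ?thesis
    using orthogonal_projection_fixes[OF assms] by (simp add: inner_diff_left)
qed

lemma orthogonal_projection_exists:
  fixes S :: "(real^'n) set"
  assumes "subspace S"
  obtains P where "is_orthogonal_projection P S"
proof -
  obtain B where B: "B \<subseteq> S" "pairwise orthogonal B" "span B = S"
    using orthogonal_basis_subspace[OF assms] by metis
  define P :: "real^'n^'n" where "P = (\<chi> i j. \<Sum>b\<in>B. b$i * b$j / (b \<bullet> b))"
  have P_mult: "P *v x = (\<Sum>b\<in>B. (b \<bullet> x / (b \<bullet> b)) *\<^sub>R b)" for x
    by (simp add: P_def vec_eq_iff matrix_vector_mult_def inner_vec_def sum_distrib_left
        sum_distrib_right sum_divide_distrib sum.swap[of _ B] algebra_simps)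
  have P_in: "P *v x \<in> S" for x
    unfolding P_mult B(3)[symmetric] by (intro span_sum span_mul span_base)
  have P_fix: "P *v s = s" if "s \<in> S" for s
  proof -
    have "s - P *v s \<in> span B"
      using that P_in assms B(3) by (simp add: subspace_diff)
    then have "orthogonal (s - P *v s) (s - P *v s)"
      using Gram_Schmidt_step[OF B(2)] by (simp add: P_mult)
    then show ?thesis
      by (simp add: orthogonal_def)
  qed
  have "transpose P = P"
    by (simp add: P_def transpose_def vec_eq_iff mult.commute)
  moreover have "P ** P = P"
    by (simp add: matrix_eq P_in P_fix flip: matrix_vector_mul_assoc)
  moreover have "im_mat P = S"
    unfolding im_mat_def using P_in P_fix by (metis image_subset_iff subsetI subset_antisym rangeI)
  ultimately show ?thesis
    using that is_orthogonal_projection_def by blast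
qed

lemma orthogonal_projection_mult_absorb:
  assumes "is_orthogonal_projection P S" "im_mat Q \<subseteq> S"
  shows "P ** Q = Q"
  using orthogonal_projection_fixes[OF assms(1)] assms(2)
  by (auto simp: matrix_eq im_mat_def simp flip: matrix_vector_mul_assoc)

lemma orthogonal_projection_unique:
  assumes "is_orthogonal_projection P S" "is_orthogonal_projection Q S"
  shows "P = Q"
proof -
  have "im_mat P \<subseteq> S" "im_mat Q \<subseteq> S"
    using assms by (simp_all add: is_orthogonal_projection_def)
  then have "Q ** P = P" "P ** Q = Q"
    using orthogonal_projection_mult_absorb assms by blast+
  then show ?thesis
    using assms by (metis is_orthogonal_projection_def matrix_transpose_mul)
qed

lemma proj_im_eqI:
  assumes "is_orthogonal_projection Q (im_mat M)"
  shows "proj_im M = Q"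
  unfolding proj_im_def
proof (rule the_equality)
  show "transpose Q = Q \<and> Q ** Q = Q \<and> im_mat Q = im_mat M"
    using assms unfolding is_orthogonal_projection_def .
  show "P = Q" if "transpose P = P \<and> P ** P = P \<and> im_mat P = im_mat M" for P
    using orthogonal_projection_unique[OF _ assms] that
    unfolding is_orthogonal_projection_def by blast
qed

section \<open>The Moore-Penrose pseudoinverse\<close>

definition moore_penrose :: "real^'n^'m \<Rightarrow> real^'m^'n \<Rightarrow> bool" where
  "moore_penrose M X \<longleftrightarrow> M ** X ** M = M \<and> X ** M ** X = X \<and>
     transpose (M ** X) = M ** X \<and> transpose (X ** M) = X ** M"

lemma moore_penrose_unique:
  assumes "moore_penrose M X" "moore_penrose M Y"
  shows "X = Y"
proof -
  have X: "M ** X ** M = M" "X ** M ** X = X" "transpose (M ** X) = M ** X" "transpose (X ** M) = X ** M"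
    and Y: "M ** Y ** M = M" "Y ** M ** Y = Y" "transpose (M ** Y) = M ** Y" "transpose (Y ** M) = Y ** M"
    using assms unfolding moore_penrose_def by auto
  have "X = X ** transpose X ** transpose M"
    using X(2,3) by (metis matrix_mul_assoc matrix_transpose_mul)
  also have "\<dots> = X ** transpose (M ** X) ** transpose (M ** Y)"
    using Y(1) by (metis matrix_mul_assoc matrix_transpose_mul)
  also have "\<dots> = X ** M ** Y"
    using X(2,3) Y(3) by (simp add: matrix_mul_assoc)
  also have "\<dots> = (X ** M) ** (Y ** M) ** Y"
    using Y(2) by (metis matrix_mul_assoc)
  also have "\<dots> = transpose (X ** M) ** transpose (Y ** M) ** Y"
    using X(4) Y(4) by simp
  also have "\<dots> = transpose M ** transpose Y ** Y"
    using X(1) by (metis matrix_mul_assoc matrix_transpose_mul)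
  also have "\<dots> = Y"
    using Y(2,4) by (metis matrix_transpose_mul)
  finally show ?thesis .
qed

lemma moore_penrose_exists: "\<exists>X. moore_penrose (M::real^'n^'m) X"
proof -
  \<comment> \<open>\<open>M\<close> maps its row space \<open>V\<close> bijectively onto its column space \<open>W\<close>;
    \<open>X\<close> projects onto \<open>W\<close> and then inverts that bijection.\<close>
  define V where "V = im_mat (transpose M)"
  define W where "W = im_mat M"
  obtain PV PW where PV: "is_orthogonal_projection PV V" and PW: "is_orthogonal_projection PW W"
    using orthogonal_projection_exists subspace_im_mat unfolding V_def W_def by metis
  have M_PV: "M *v (PV *v x) = M *v x" for x
  proof -
    have "x - PV *v x \<in> ker_mat M"
      using orthogonal_projection_residual[OF PV]
      by (simp add: ker_mat_eq_orthogonal_comp_im V_def orthogonal_comp_def orthogonal_def inner_commute)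
    then show ?thesis
      by (simp add: ker_mat_def matrix_vector_mult_diff_distrib)
  qed
  have "inj_on ((*v) M) V"
  proof (rule inj_onI)
    fix v v' assume "v \<in> V" "v' \<in> V" "M *v v = M *v v'"
    then have "v - v' \<in> V \<inter> V\<^sup>\<bottom>"
      by (simp add: V_def subspace_diff subspace_im_mat ker_mat_def matrix_vector_mult_diff_distrib
          flip: ker_mat_eq_orthogonal_comp_im)
    then have "v - v' = 0"
      using orthogonal_Int_0[OF subspace_im_mat[of "transpose M"]] unfolding V_def by blast
    then show "v = v'"
      by simp
  qed
  then obtain g where g_in: "range g \<subseteq> V" and g_lin: "linear g" and g_inv: "\<And>v. v \<in> V \<Longrightarrow> g (M *v v) = v"
    using linear_exists_left_inverse_on[OF matrix_vector_mul_linear subspace_im_mat] V_def by metis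
  define X where "X = matrix g ** PW"
  have X_mult: "X *v y = g (PW *v y)" for y
    using matrix_vector_mul(2)[OF g_lin] by (simp add: X_def fun_eq_iff flip: matrix_vector_mul_assoc)
  have XM: "X ** M = PV"
  proof -
    have "g (PW *v (M *v x)) = PV *v x" for x
      using orthogonal_projection_fixes[OF PW] g_inv PV M_PV
      by (metis W_def im_mat_def is_orthogonal_projection_def rangeI)
    then show ?thesis
      by (simp add: matrix_eq X_mult flip: matrix_vector_mul_assoc)
  qed
  have MX: "M ** X = PW"
  proof -
    have "M *v g (PW *v y) = PW *v y" for y
    proof -
      obtain t where t: "PW *v y = M *v t"
        using PW by (auto simp: is_orthogonal_projection_def W_def im_mat_def)
      have "PV *v t \<in> V"
        using PV by (auto simp: is_orthogonal_projection_def im_mat_def)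
      then show ?thesis
        using g_inv[of "PV *v t"] by (simp add: t M_PV)
    qed
    then show ?thesis
      by (simp add: matrix_eq X_mult flip: matrix_vector_mul_assoc)
  qed
  have "M ** X ** M = M"
    unfolding MX using orthogonal_projection_mult_absorb[OF PW] W_def by blast
  moreover have "X ** M ** X = X"
  proof -
    have "im_mat X \<subseteq> V"
      using g_in by (auto simp: im_mat_def X_mult)
    then show ?thesis
      unfolding XM by (rule orthogonal_projection_mult_absorb[OF PV])
  qed
  ultimately show ?thesis
    using PV PW XM MX unfolding moore_penrose_def is_orthogonal_projection_def by metis
qed

lemma moore_penrose_pinv: "moore_penrose M (pinv M)"
proof -
  obtain X where "moore_penrose M X"
    using moore_penrose_exists by blast
  moreover have "pinv M = X"
    unfolding pinv_def
    by (rule the_equality) (use calculation moore_penrose_unique in \<open>auto simp: moore_penrose_def\<close>)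
  ultimately show ?thesis
    by simp
qed

lemma moore_penrose_transpose: "moore_penrose M X \<Longrightarrow> moore_penrose (transpose M) (transpose X)"
  unfolding moore_penrose_def by (metis matrix_transpose_mul matrix_mul_assoc transpose_transpose)

lemma ker_mat_mult_right: "ker_mat B \<subseteq> ker_mat (A ** B)"
  by (auto simp: ker_mat_def simp flip: matrix_vector_mul_assoc)

lemma im_mat_mult_left: "im_mat (A ** B) \<subseteq> im_mat A"
  by (auto simp: im_mat_def simp flip: matrix_vector_mul_assoc)

lemma moore_penrose_ker:
  assumes "moore_penrose M X"
  shows "ker_mat X = ker_mat (transpose M)"
proof -
  have "X = X ** transpose X ** transpose M" "transpose M = transpose M ** M ** X"
    using assms unfolding moore_penrose_def by (metis matrix_mul_assoc matrix_transpose_mul)+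
  then show ?thesis
    using ker_mat_mult_right by (metis subset_antisym)
qed

lemma ker_pinv: "ker_mat (pinv M) = ker_mat (transpose M)"
  by (rule moore_penrose_ker[OF moore_penrose_pinv])

lemma ker_transpose_pinv: "ker_mat (transpose (pinv M)) = ker_mat M"
  using moore_penrose_ker[OF moore_penrose_transpose[OF moore_penrose_pinv]] by simp

lemma proj_im_eq_pinv_mult:
  assumes "ker_mat L = ker_mat (transpose M)"
  shows "proj_im M = pinv L ** L"
proof (rule proj_im_eqI)
  let ?Z = "pinv L"
  have Z: "L ** ?Z ** L = L" "?Z ** L ** ?Z = ?Z" "transpose (?Z ** L) = ?Z ** L"
    using moore_penrose_pinv unfolding moore_penrose_def by blast+
  have "im_mat ?Z \<subseteq> im_mat (?Z ** L)"
    using im_mat_mult_left[of "?Z ** L" ?Z] Z(2) by simp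
  then have "im_mat (?Z ** L) = im_mat ?Z"
    using im_mat_mult_left by blast
  also have "\<dots> = im_mat M"
    by (rule im_mat_eqI) (simp add: ker_transpose_pinv assms)
  finally show "is_orthogonal_projection (?Z ** L) (im_mat M)"
    unfolding is_orthogonal_projection_def using Z by (simp add: matrix_mul_assoc)
qed

section \<open>Seminorms induced by positive semidefinite matrices\<close>

lemma hnorm_nonneg: "psd H \<Longrightarrow> 0 \<le> hnorm H x"
  by (simp add: hnorm_def psd_def)

lemma hnorm_scaleR: "hnorm H (c *\<^sub>R x) = \<bar>c\<bar> * hnorm H x"
proof -
  have "(c *\<^sub>R x) \<bullet> (H *v (c *\<^sub>R x)) = c\<^sup>2 * (x \<bullet> (H *v x))"
    by (simp add: matrix_vector_mult_scaleR power2_eq_square)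
  then show ?thesis
    by (simp add: hnorm_def real_sqrt_mult)
qed

lemma hopnorm_le:
  fixes H M :: "real^'n^'n"
  assumes "psd H" "0 \<le> c" "\<And>x. hnorm H (M *v x) \<le> c * hnorm H x"
  shows "hopnorm H M \<le> c"
  unfolding hopnorm_def
proof (rule cSup_least)
  have "(\<chi> i. 1 :: real^'n) \<noteq> 0"
    by (simp add: vec_eq_iff)
  then show "{hnorm H (M *v x) / hnorm H x |x. x \<noteq> 0} \<noteq> {}"
    by blast
  have "hnorm H (M *v x) / hnorm H x \<le> c" for x
    using assms hnorm_nonneg[OF assms(1), of x] by (cases "hnorm H x = 0") (simp_all add: divide_le_eq)
  then show "r \<le> c" if "r \<in> {hnorm H (M *v x) / hnorm H x |x. x \<noteq> 0}" for r
    using that by blast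
qed

lemma hnorm_pinv_mult_sym_part_le:
  assumes U_psd: "psd (sym_part L)" and ker_U: "ker_mat (sym_part L) = ker_mat (transpose L)"
  shows "hnorm (sym_part L) (pinv L *v (sym_part L *v x)) \<le> hnorm (sym_part L) x"
proof -
  let ?U = "sym_part L"
  define y where "y = pinv L *v (?U *v x)"
  have "?U *v x \<in> im_mat ?U"
    unfolding im_mat_def by blast
  also have "im_mat ?U = im_mat L"
    by (rule im_mat_eqI) (simp add: transpose_sym_part ker_U)
  finally obtain t where t: "?U *v x = L *v t"
    unfolding im_mat_def by blast
  have "L *v y = ?U *v x"
    using moore_penrose_pinv[of L] unfolding y_def t moore_penrose_def
    by (simp add: matrix_vector_mul_assoc matrix_mul_assoc)
  then have "y \<bullet> (?U *v y) = y \<bullet> (?U *v x)"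
    by (simp add: inner_sym_part)
  moreover have "x \<bullet> (?U *v y) = y \<bullet> (?U *v x)"
    using inner_transpose_mult[of ?U x y] by (simp add: transpose_sym_part inner_commute)
  moreover have "0 \<le> (y - x) \<bullet> (?U *v (y - x))"
    using U_psd by (simp add: psd_def)
  ultimately have "y \<bullet> (?U *v y) \<le> x \<bullet> (?U *v x)"
    by (simp add: matrix_vector_mult_diff_distrib inner_diff_left inner_diff_right)
  then show ?thesis
    by (simp add: hnorm_def y_def)
qed

section \<open>Partial symmetrization of a matrix\<close>

lemma ker_sym_part:
  assumes "ker_mat L = {x. x \<bullet> (L *v x) = 0}" "ker_mat (transpose L) = {x. x \<bullet> (L *v x) = 0}"
  shows "ker_mat (sym_part L) = {x. x \<bullet> (L *v x) = 0}"
proof (intro set_eqI iffI)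
  fix x
  assume "x \<in> {x. x \<bullet> (L *v x) = 0}"
  then have "L *v x = 0" "transpose L *v x = 0"
    using assms by (simp_all add: ker_mat_def set_eq_iff)
  then show "x \<in> ker_mat (sym_part L)"
    by (simp add: ker_mat_def sym_part_mult_vec)
qed (simp add: ker_mat_def flip: inner_sym_part[of _ L])

lemma sym_part_partial_symmetrization:
  "sym_part (L + \<beta> *\<^sub>R sym_part L) = (1 + \<beta>) *\<^sub>R sym_part L"
  by (simp add: sym_part_def transpose_def vec_eq_iff field_simps)

lemma inner_partial_symmetrization:
  "x \<bullet> ((L + \<beta> *\<^sub>R sym_part L) *v x) = (1 + \<beta>) * (x \<bullet> (L *v x))"
  by (simp add: matrix_vector_mult_add_rdistrib inner_add_right inner_sym_part algebra_simps
      flip: scaleR_matrix_vector_assoc)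

lemma ker_partial_symmetrization:
  assumes ker_L: "ker_mat L = {x. x \<bullet> (L *v x) = 0}"
    and ker_LT: "ker_mat (transpose L) = {x. x \<bullet> (L *v x) = 0}"
    and "\<beta> \<ge> 0"
  shows "ker_mat (L + \<beta> *\<^sub>R sym_part L) = {x. x \<bullet> (L *v x) = 0}"
    and "ker_mat (transpose (L + \<beta> *\<^sub>R sym_part L)) = {x. x \<bullet> (L *v x) = 0}"
proof -
  let ?K = "{x. x \<bullet> (L *v x) = 0}" and ?L' = "L + \<beta> *\<^sub>R sym_part L"
  have ker_U: "ker_mat (sym_part L) = ?K"
    using ker_L ker_LT by (rule ker_sym_part)
  have "?L' *v x = 0" "transpose ?L' *v x = 0" if "x \<in> ?K" for x
  proof -
    have "x \<in> ker_mat L" "x \<in> ker_mat (transpose L)" "x \<in> ker_mat (sym_part L)"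
      using that ker_L ker_LT ker_U by simp_all
    then show "?L' *v x = 0" "transpose ?L' *v x = 0"
      by (simp_all add: ker_mat_def transpose_add transpose_scalar transpose_sym_part
          matrix_vector_mult_add_rdistrib flip: scaleR_matrix_vector_assoc)
  qed
  moreover have "x \<in> ?K" if "?L' *v x = 0 \<or> transpose ?L' *v x = 0" for x
  proof -
    have "x \<bullet> (?L' *v x) = 0"
      using that inner_transpose_mult_self[of x ?L'] by auto
    then show ?thesis
      using \<open>\<beta> \<ge> 0\<close> by (simp add: inner_partial_symmetrization)
  qed
  ultimately show "ker_mat ?L' = ?K" "ker_mat (transpose ?L') = ?K"
    unfolding ker_mat_def by blast+
qed

lemma approx_pinv_partial_symmetrization:
  fixes L :: "real^'n^'n"
  assumes nonneg: "\<And>x. 0 \<le> x \<bullet> (L *v x)"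
    and ker_L: "ker_mat L = {x. x \<bullet> (L *v x) = 0}"
    and ker_LT: "ker_mat (transpose L) = {x. x \<bullet> (L *v x) = 0}"
    and "\<beta> > 0"
  shows "approx_pinv (\<beta> / (1 + \<beta>)) (pinv (L + \<beta> *\<^sub>R sym_part L)) L
           (sym_part (L + \<beta> *\<^sub>R sym_part L))"
proof -
  define L' where "L' = L + \<beta> *\<^sub>R sym_part L"
  define U' where "U' = sym_part L'"
  define Z where "Z = pinv L'"
  define c where "c = \<beta> / (1 + \<beta>)"
  have c_nonneg: "0 \<le> c"
    using \<open>\<beta> > 0\<close> by (simp add: c_def)
  note ker_L' = ker_partial_symmetrization[OF ker_L ker_LT less_imp_le[OF \<open>\<beta> > 0\<close>], folded L'_def]
  have ker_U': "ker_mat U' = ker_mat (transpose L')"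
    using \<open>\<beta> > 0\<close> ker_L' ker_sym_part[of L']
    by (simp add: U'_def L'_def inner_partial_symmetrization)
  have psd_U': "psd U'"
    using nonneg \<open>\<beta> > 0\<close>
    by (simp add: psd_def U'_def L'_def transpose_sym_part inner_sym_part inner_partial_symmetrization)
  have error_mult: "(proj_im L - Z ** L) *v x = c *\<^sub>R (Z *v (U' *v x))" for x
  proof -
    have "proj_im L = Z ** L'"
      unfolding Z_def by (rule proj_im_eq_pinv_mult) (simp add: ker_L' ker_LT)
    then have "(proj_im L - Z ** L) *v x = Z *v (L' *v x - L *v x)"
      by (simp add: matrix_vector_mult_diff_rdistrib
          matrix_vector_right_distrib matrix_vector_mult_diff_distrib flip: matrix_vector_mul_assoc)
    also have "L' *v x - L *v x = c *\<^sub>R (U' *v x)"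
      using \<open>\<beta> > 0\<close>
      by (simp add: L'_def U'_def c_def sym_part_partial_symmetrization matrix_vector_mult_add_rdistrib
          flip: scaleR_matrix_vector_assoc)
    finally show ?thesis
      by (simp add: matrix_vector_mult_scaleR)
  qed
  have "hnorm U' (Z *v (U' *v x)) \<le> hnorm U' x" for x
    using hnorm_pinv_mult_sym_part_le[of L' x] psd_U' ker_U' by (simp add: U'_def Z_def)
  then have "hnorm U' ((proj_im L - Z ** L) *v x) \<le> c * hnorm U' x" for x
    unfolding error_mult hnorm_scaleR using c_nonneg by (simp add: mult_left_mono)
  then have "hopnorm U' (proj_im L - Z ** L) \<le> c"
    by (rule hopnorm_le[OF psd_U' c_nonneg])
  moreover have "ker_mat Z = ker_mat (transpose L')" "ker_mat (transpose Z) = ker_mat L'"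
    by (simp_all add: Z_def ker_pinv ker_transpose_pinv)
  ultimately show ?thesis
    using psd_U' ker_U' ker_L' ker_L ker_LT
    by (simp add: approx_pinv_def L'_def U'_def Z_def c_def)
qed

section \<open>Laplacians of Eulerian graphs\<close>

lemma dlap_mult_vec_nth:
  "(dlap w *v x) $ i = (\<Sum>k\<in>UNIV. w i k) * x $ i - (\<Sum>j\<in>UNIV. w j i * x $ j)"
  unfolding dlap_def matrix_vector_mult_diff_rdistrib
  by (simp add: matrix_vector_mult_def outdeg_mat_def adj_mat_def transpose_def
      if_distrib[of "\<lambda>t. t * _"] sum.delta cong: if_cong)

lemma transpose_dlap_mult_vec_nth:
  "(transpose (dlap w) *v x) $ i = (\<Sum>k\<in>UNIV. w i k) * x $ i - (\<Sum>j\<in>UNIV. w i j * x $ j)"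
  unfolding dlap_def transpose_diff matrix_vector_mult_diff_rdistrib
  by (simp add: matrix_vector_mult_def outdeg_mat_def adj_mat_def transpose_def
      if_distrib[of "\<lambda>t. t * _"] sum.delta' cong: if_cong)

lemma eulerian_outdeg_eq_indeg:
  assumes "eulerian w"
  shows "(\<Sum>k\<in>UNIV. w i k) = (\<Sum>j\<in>UNIV. w j i)"
proof -
  have "(dlap w *v (\<chi> i. 1)) $ i = 0"
    using assms by (simp add: eulerian_def)
  then show ?thesis
    by (simp add: dlap_mult_vec_nth)
qed

lemma eulerian_inner_dlap:
  assumes "eulerian w"
  shows "2 * (x \<bullet> (dlap w *v x)) = (\<Sum>i\<in>UNIV. \<Sum>j\<in>UNIV. w i j * (x $ i - x $ j)\<^sup>2)"
proof -
  let ?deg_sq = "\<Sum>i\<in>UNIV. (\<Sum>k\<in>UNIV. w i k) * (x $ i)\<^sup>2"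
  and ?cross = "\<Sum>i\<in>UNIV. \<Sum>j\<in>UNIV. w i j * x $ i * x $ j"
  have "x \<bullet> (dlap w *v x) = ?deg_sq - (\<Sum>i\<in>UNIV. \<Sum>j\<in>UNIV. w j i * x $ i * x $ j)"
    by (simp add: inner_vec_def dlap_mult_vec_nth right_diff_distrib sum_subtractf sum_distrib_left
        power2_eq_square algebra_simps)
  also have "(\<Sum>i\<in>UNIV. \<Sum>j\<in>UNIV. w j i * x $ i * x $ j) = ?cross"
    by (subst sum.swap) (simp add: mult.commute mult.left_commute)
  finally have quad: "x \<bullet> (dlap w *v x) = ?deg_sq - ?cross" .
  have out: "(\<Sum>i\<in>UNIV. \<Sum>j\<in>UNIV. w i j * (x $ i)\<^sup>2) = ?deg_sq"
    by (simp add: sum_distrib_right)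
  have "(\<Sum>i\<in>UNIV. \<Sum>j\<in>UNIV. w i j * (x $ j)\<^sup>2) = (\<Sum>j\<in>UNIV. (\<Sum>i\<in>UNIV. w i j) * (x $ j)\<^sup>2)"
    by (subst sum.swap) (simp add: sum_distrib_right)
  also have "\<dots> = ?deg_sq"
    using eulerian_outdeg_eq_indeg[OF assms] by simp
  finally have "in": "(\<Sum>i\<in>UNIV. \<Sum>j\<in>UNIV. w i j * (x $ j)\<^sup>2) = ?deg_sq" .
  have "(\<Sum>i\<in>UNIV. \<Sum>j\<in>UNIV. w i j * (x $ i - x $ j)\<^sup>2) =
      (\<Sum>i\<in>UNIV. \<Sum>j\<in>UNIV. w i j * (x $ i)\<^sup>2) + (\<Sum>i\<in>UNIV. \<Sum>j\<in>UNIV. w i j * (x $ j)\<^sup>2) - 2 * ?cross"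
    by (simp add: power2_diff algebra_simps sum.distrib sum_subtractf sum_distrib_left)
  then show ?thesis
    using quad out "in" by simp
qed

definition constant_on_edges :: "('n::finite \<Rightarrow> 'n \<Rightarrow> real) \<Rightarrow> real^'n \<Rightarrow> bool" where
  "constant_on_edges w x \<longleftrightarrow> (\<forall>i j. w i j \<noteq> 0 \<longrightarrow> x $ i = x $ j)"

lemma inner_dlap_nonneg:
  assumes "weighted_digraph w" "eulerian w"
  shows "0 \<le> x \<bullet> (dlap w *v x)"
proof -
  have "0 \<le> (\<Sum>i\<in>UNIV. \<Sum>j\<in>UNIV. w i j * (x $ i - x $ j)\<^sup>2)"
    using assms(1) by (simp add: weighted_digraph_def sum_nonneg)
  then show ?thesis
    using eulerian_inner_dlap[OF assms(2), of x] by simp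
qed

lemma constant_on_edges_if_inner_dlap_eq_0:
  assumes "weighted_digraph w" "eulerian w" "x \<bullet> (dlap w *v x) = 0"
  shows "constant_on_edges w x"
  unfolding constant_on_edges_def
proof (intro allI impI)
  fix i j
  assume "w i j \<noteq> 0"
  have term_nonneg: "0 \<le> w i' j' * (x $ i' - x $ j')\<^sup>2" for i' j'
    using assms(1) by (simp add: weighted_digraph_def)
  have "(\<Sum>i\<in>UNIV. \<Sum>j\<in>UNIV. w i j * (x $ i - x $ j)\<^sup>2) = 0"
    using eulerian_inner_dlap[OF assms(2), of x] assms(3) by simp
  then have "w i j * (x $ i - x $ j)\<^sup>2 = 0"
    using term_nonneg by (simp add: sum_nonneg_eq_0_iff sum_nonneg)
  then show "x $ i = x $ j"
    using \<open>w i j \<noteq> 0\<close> by simp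
qed

lemma dlap_mult_constant_on_edges:
  assumes "eulerian w" "constant_on_edges w x"
  shows "dlap w *v x = 0"
proof -
  have "(\<Sum>j\<in>UNIV. w j i * x $ j) = (\<Sum>j\<in>UNIV. w j i) * x $ i" for i
    using assms(2) unfolding constant_on_edges_def sum_distrib_right by (force intro: sum.cong)
  then show ?thesis
    by (simp add: vec_eq_iff dlap_mult_vec_nth eulerian_outdeg_eq_indeg[OF assms(1)])
qed

lemma transpose_dlap_mult_constant_on_edges:
  assumes "constant_on_edges w x"
  shows "transpose (dlap w) *v x = 0"
proof -
  have "(\<Sum>j\<in>UNIV. w i j * x $ j) = (\<Sum>j\<in>UNIV. w i j) * x $ i" for i
    using assms unfolding constant_on_edges_def sum_distrib_right by (force intro: sum.cong)
  then show ?thesis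
    by (simp add: vec_eq_iff transpose_dlap_mult_vec_nth)
qed

lemma ker_dlap:
  assumes "weighted_digraph w" "eulerian w"
  shows "ker_mat (dlap w) = {x. x \<bullet> (dlap w *v x) = 0}"
  using constant_on_edges_if_inner_dlap_eq_0[OF assms] dlap_mult_constant_on_edges[OF assms(2)]
  by (auto simp: ker_mat_def)

lemma ker_transpose_dlap:
  assumes "weighted_digraph w" "eulerian w"
  shows "ker_mat (transpose (dlap w)) = {x. x \<bullet> (dlap w *v x) = 0}"
  using constant_on_edges_if_inner_dlap_eq_0[OF assms] transpose_dlap_mult_constant_on_edges
  by (auto simp: ker_mat_def simp flip: inner_transpose_mult_self[of _ "dlap w"])

lemma dlap_partial_sym:
  assumes "eulerian w"
  shows "dlap (partial_sym \<beta> w) = dlap w + \<beta> *\<^sub>R sym_part (dlap w)"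
proof -
  have "(\<Sum>k\<in>UNIV. partial_sym \<beta> w i k) =
      \<beta> / 2 * (\<Sum>k\<in>UNIV. w i k) + \<beta> / 2 * (\<Sum>k\<in>UNIV. w k i) + (\<Sum>k\<in>UNIV. w i k)" for i
    by (simp add: partial_sym_def undirectify_def sum.distrib sum_distrib_left algebra_simps
        sum_divide_distrib add_divide_distrib)
  then have "(\<Sum>k\<in>UNIV. partial_sym \<beta> w i k) = (1 + \<beta>) * (\<Sum>k\<in>UNIV. w i k)" for i
    using eulerian_outdeg_eq_indeg[OF assms, of i] by (simp add: algebra_simps)
  then show ?thesis
    by (auto simp: vec_eq_iff dlap_def outdeg_mat_def adj_mat_def transpose_def sym_part_def
        partial_sym_def undirectify_def field_simps)
qed

theorem lemma4p6:
  fixes w :: "'n::finite \<Rightarrow> 'n \<Rightarrow> real" and \<beta> :: real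
  assumes "weighted_digraph w"
    and "eulerian w"
    and "\<beta> > 0"
  shows "approx_pinv (1 - 1 / (1 + \<beta>)) (pinv (dlap (partial_sym \<beta> w))) (dlap w)
           (sym_part (dlap (partial_sym \<beta> w)))"
proof -
  have "1 - 1 / (1 + \<beta>) = \<beta> / (1 + \<beta>)"
    using \<open>\<beta> > 0\<close> by (simp add: field_simps)
  then show ?thesis
    using approx_pinv_partial_symmetrization[OF inner_dlap_nonneg[OF assms(1,2)]
        ker_dlap[OF assms(1,2)] ker_transpose_dlap[OF assms(1,2)] \<open>\<beta> > 0\<close>]
    by (simp add: dlap_partial_sym[OF assms(2)])
qed

end
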